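(* Suppose $s \geq 2$, $a \geq 1$ with $at' \leq k_I-\delta$ and $t'(sk_I+a)+\delta-1 \leq q$. Then the linear code $\mathcal{C}^F$ over $\mathbb{F}_q$ with parity-check matrix $H^F$ (described in the context) is an optimal $\big(n_F=t'(sk_{I}+a+\delta-1),~k_F=st'k_I,~d_F=at'+\delta;~(r=sk_{I}+a,\delta)\big)$-LRC.
   Context: Let $q$ be a prime power and let $\delta\geq 2$, $t'\geq 1$, $s$, $a$, $k_I$ be positive integers; set $t=st'$, $r=sk_I+a$, $n_F=t'(r+\delta-1)$ and $k_F=tk_I$. Let $\alpha_{i,j}$ ($i\in[t]$, $j\in[k_I]$), $\beta_{i',j'}$ ($i'\in[t']$, $j'\in[a]$) and $\gamma_\ell$ ($\ell\in[\delta-1]$) be $tk_I+at'+\delta-1$ pairwise distinct elements of $\mathbb{F}_q$. For elements $x_1,\dots,x_n\in\mathbb{F}_q$, $V_k(x_1,\dots,x_n)$ denotes the $k\times n$ Vandermonde matrix whose $(u,v)$ entry is $x_v^{u-1}$. For $i\in[t']$ let $L_i$ be the ordered list of $r+\delta-1$ elements $\alpha_{s(i-1)+1,1},\dots,\alpha_{s(i-1)+1,k_I},\dots,\alpha_{si,1},\dots,\alpha_{si,k_I},\beta_{i,1},\dots,\beta_{i,a},\gamma_1,\dots,\gamma_{\delta-1}$. Let $A_i=V_{\delta-1}(L_i)\in\mathbb{F}_q^{(\delta-1)\times(r+\delta-1)}$, and let $B_i\in\mathbb{F}_q^{at'\times(r+\delta-1)}$ be the matrix whose rows are the entrywise powers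 of the list $L_i$ with exponents $\delta-1,\delta,\dots,at'+\delta-2$ (i.e., the row with exponent $e$ is $(y^{e})_{y\in L_i}$). Define $H^F$ as the block matrix with $A_1,\dots,A_{t'}$ placed block-diagonally in the top $t'(\delta-1)$ rows (zeros elsewhere) and the bottom block row $(B_1\;B_2\;\cdots\;B_{t'})$. An $(n,k,d;(r,\delta))$-LRC is a code of length $n$, dimension $k$, minimum distance $d$ in which each coordinate lies in a set $J$ of at most $r+\delta-1$ coordinates such that the restriction of the code to $J$ has minimum distance at least $\delta$; it is optimal if $d=n-k+1-(\lceil k/r\rceil-1)(\delta-1)$ (the Singleton-type bound). *)

theory Defs
  imports Complex_Main "HOL-Library.Cardinality"
begin

text \<open>Words of length n over the alphabet 'a are modelled as functions
  nat \<Rightarrow> 'a that vanish outside the coordinates {0..<n}.\<close>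

definition hamming_dist :: "nat \<Rightarrow> (nat \<Rightarrow> 'a::zero) \<Rightarrow> (nat \<Rightarrow> 'a) \<Rightarrow> nat" where
  "hamming_dist n c c' = card {j\<in>{..<n}. c j \<noteq> c' j}"

definition min_dist :: "nat \<Rightarrow> (nat \<Rightarrow> 'a::zero) set \<Rightarrow> nat" where
  "min_dist n C = Min {hamming_dist n c c' | c c'. c \<in> C \<and> c' \<in> C \<and> c \<noteq> c'}"

definition is_LRC :: "nat \<Rightarrow> nat \<Rightarrow> nat \<Rightarrow> nat \<Rightarrow> nat \<Rightarrow> (nat \<Rightarrow> 'a::{finite,zero}) set \<Rightarrow> bool" where
  "is_LRC n k d r \<delta> C \<longleftrightarrow>
     C \<subseteq> {c. \<forall>j\<ge>n. c j = 0} \<and>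
     card C = CARD('a) ^ k \<and>
     min_dist n C = d \<and>
     (\<forall>i<n. \<exists>J. J \<subseteq> {..<n} \<and> i \<in> J \<and> card J \<le> r + \<delta> - 1 \<and>
        (\<forall>c\<in>C. \<forall>c'\<in>C. (\<exists>j\<in>J. c j \<noteq> c' j) \<longrightarrow> \<delta> \<le> card {j\<in>J. c j \<noteq> c' j}))"

text \<open>Optimality: the Singleton-type bound d = n - k + 1 - (ceil(k/r) - 1)(delta - 1) is attained.\<close>
definition LRC_optimal :: "nat \<Rightarrow> nat \<Rightarrow> nat \<Rightarrow> nat \<Rightarrow> nat \<Rightarrow> bool" where
  "LRC_optimal n k d r \<delta> \<longleftrightarrow>
     int d = int n - int k + 1 - (\<lceil>real k / real r\<rceil> - 1) * (int \<delta> - 1)"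

definition evpt :: "(nat \<Rightarrow> nat \<Rightarrow> 'a) \<Rightarrow> (nat \<Rightarrow> nat \<Rightarrow> 'a) \<Rightarrow> (nat \<Rightarrow> 'a)
    \<Rightarrow> nat \<Rightarrow> nat \<Rightarrow> nat \<Rightarrow> nat \<Rightarrow> nat \<Rightarrow> 'a" where
  "evpt \<alpha> \<beta> \<gamma> s kI a i p =
     (if p < s * kI then \<alpha> (s * i + p div kI) (p mod kI)
      else if p < s * kI + a then \<beta> i (p - s * kI)
      else \<gamma> (p - (s * kI + a)))"

text \<open>The code C^F = kernel of H^F. Coordinate i*(r+delta-1)+p corresponds to column p of block i.
  Rows of A_i: exponents 0..delta-2 on block i; rows of (B_1 ... B_t'): exponents
  delta-1 .. a t' + delta - 2 on all coordinates.\<close>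
definition code_F :: "nat \<Rightarrow> nat \<Rightarrow> nat \<Rightarrow> nat \<Rightarrow> nat \<Rightarrow> (nat \<Rightarrow> nat \<Rightarrow> 'a::field) \<Rightarrow> (nat \<Rightarrow> nat \<Rightarrow> 'a)
    \<Rightarrow> (nat \<Rightarrow> 'a) \<Rightarrow> (nat \<Rightarrow> 'a) set" where
  "code_F \<delta> t' s a kI \<alpha> \<beta> \<gamma> =
     (let r = s * kI + a; m = r + \<delta> - 1; n = t' * m in
      {c. (\<forall>j\<ge>n. c j = 0) \<and>
          (\<forall>i<t'. \<forall>e<\<delta> - 1. (\<Sum>p<m. c (i * m + p) * evpt \<alpha> \<beta> \<gamma> s kI a i p ^ e) = 0) \<and>
          (\<forall>e\<in>{\<delta> - 1..<a * t' + \<delta> - 1}.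
              (\<Sum>i<t'. \<Sum>p<m. c (i * m + p) * evpt \<alpha> \<beta> \<gamma> s kI a i p ^ e) = 0)})"

end

theory Submission
  imports Defs "HOL-Computational_Algebra.Polynomial" "HOL-Library.FuncSet"
begin

text \<open>All parity checks of the code are power sums of the evaluation points. Within a block the
  m = r + delta - 1 points are distinct and the first delta - 1 power sums vanish, so by the
  Vandermonde argument a nonzero difference of codewords has at least delta nonzero entries in
  every block it touches: this is the locality. Globally the first a t' + delta - 1 power sums
  vanish, but only over the points counted with multiplicity, since the delta - 1 gammas are shared
  by all blocks. Summing the entries over coordinates with a common point gives a vector on distinct
  points, of weight at least a t' + delta unless it vanishes; and it vanishes only for the zero
  codeword, as off the gammas it agrees with the codeword and locality then clears the gammas. A
  codeword supported on the first a t' + delta coordinates of one block attains the bound. The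
  same collapsed weight shows that the s t' kI alpha coordinates determine a codeword, while
  counting the t' (delta - 1) + a t' parity equations bounds the dimension from below. Optimality
  then reduces to ceil (s t' kI / r) = t'.\<close>

section \<open>Vanishing power sums\<close>

lemma sum_mult_poly_eq_zero_if_power_sums_vanish:
  fixes x w :: "'b \<Rightarrow> 'a::comm_ring_1"
  assumes "\<forall>e<N. (\<Sum>p\<in>P. w p * x p ^ e) = 0" and "degree f < N"
  shows "(\<Sum>p\<in>P. w p * poly f (x p)) = 0"
proof -
  have "(\<Sum>p\<in>P. w p * poly f (x p)) = (\<Sum>i\<le>degree f. coeff f i * (\<Sum>p\<in>P. w p * x p ^ i))"
    by (simp add: poly_altdef sum_distrib_left sum.swap[of _ P] mult_ac)
  also have "\<dots> = 0"
    using assms by (intro sum.neutral) auto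
  finally show ?thesis .
qed

lemma power_sums_vanish_imp_card_support_gt:
  fixes x w :: "'b \<Rightarrow> 'a::field"
  assumes "finite P" and "inj_on x P"
    and "\<forall>e<N. (\<Sum>p\<in>P. w p * x p ^ e) = 0" and "\<exists>p\<in>P. w p \<noteq> 0"
  shows "N < card {p\<in>P. w p \<noteq> 0}"
proof (rule ccontr)
  define T where "T = {p\<in>P. w p \<noteq> 0}"
  assume "\<not> N < card {p\<in>P. w p \<noteq> 0}"
  then have "card T \<le> N" by (simp add: T_def)
  obtain p0 where p0: "p0 \<in> P" "w p0 \<noteq> 0" using assms(4) by blast
  have "finite T" "p0 \<in> T" using assms(1) p0 by (simp_all add: T_def)
  \<comment> \<open>The polynomial vanishing on the other support points isolates the term of p0.\<close>
  define f where "f = (\<Prod>q\<in>T - {p0}. [:- x q, 1:])"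
  have "degree f \<le> card (T - {p0})"
    unfolding f_def using degree_prod_sum_le[of "T - {p0}" "\<lambda>q. [:- x q, 1:]"] \<open>finite T\<close> by simp
  also have "\<dots> < N" using card_Diff1_less[OF \<open>finite T\<close> \<open>p0 \<in> T\<close>] \<open>card T \<le> N\<close> by linarith
  finally have "(\<Sum>p\<in>P. w p * poly f (x p)) = 0"
    using sum_mult_poly_eq_zero_if_power_sums_vanish assms(3) by blast
  moreover have "w p * poly f (x p) = 0" if "p \<in> P - {p0}" for p
    using that \<open>finite T\<close> by (cases "w p = 0") (auto simp: f_def poly_prod T_def)
  ultimately have "w p0 * poly f (x p0) = 0"
    using sum.remove[OF assms(1) p0(1), of "\<lambda>p. w p * poly f (x p)"] by simp
  moreover have "poly f (x p0) \<noteq> 0"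
    using \<open>finite T\<close> assms(2) p0(1) by (auto simp: f_def poly_prod T_def inj_on_def)
  ultimately show False using p0(2) by simp
qed

section \<open>Counting solutions of homogeneous systems\<close>

lemma card_supported_functions:
  assumes "finite D"
  shows "card {x :: 'd \<Rightarrow> 'a::{finite,zero}. \<forall>j. j \<notin> D \<longrightarrow> x j = 0} = CARD('a) ^ card D"
proof -
  have "bij_betw (\<lambda>x. restrict x D) {x :: 'd \<Rightarrow> 'a. \<forall>j. j \<notin> D \<longrightarrow> x j = 0} (D \<rightarrow>\<^sub>E UNIV)"
    by (rule bij_betw_byWitness[where f' = "\<lambda>g j. if j \<in> D then g j else 0"])
      (auto simp: fun_eq_iff PiE_def extensional_def)
  then show ?thesis
    using assms by (simp add: bij_betw_same_card card_funcsetE)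
qed

lemma finite_supported_functions:
  assumes "finite D"
  shows "finite {x :: 'd \<Rightarrow> 'a::{finite,zero}. \<forall>j. j \<notin> D \<longrightarrow> x j = 0}"
  by (rule card_ge_0_finite) (simp add: card_supported_functions[OF assms])

text \<open>Rank-nullity by counting: the fibres of L are translates of its kernel.\<close>
lemma card_kernel_ge:
  fixes L :: "('d \<Rightarrow> 'a::{finite,ab_group_add}) \<Rightarrow> 'i \<Rightarrow> 'a"
  assumes "finite D" and "finite I"
    and additive: "\<And>x y. L (\<lambda>j. x j + y j) = (\<lambda>i. L x i + L y i)"
    and "\<And>x i. i \<notin> I \<Longrightarrow> L x i = 0"
  shows "CARD('a) ^ card D
    \<le> CARD('a) ^ card I * card {x. (\<forall>j. j \<notin> D \<longrightarrow> x j = 0) \<and> L x = (\<lambda>_. 0)}"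
proof -
  define V where "V = {x :: 'd \<Rightarrow> 'a. \<forall>j. j \<notin> D \<longrightarrow> x j = 0}"
  define K where "K = {x\<in>V. L x = (\<lambda>_. 0)}"
  have "finite V" unfolding V_def using assms(1) by (rule finite_supported_functions)
  then have "finite K" by (simp add: K_def)
  have fibre: "card {x\<in>V. L x = L x0} \<le> card K" if "x0 \<in> V" for x0
  proof -
    have "{x\<in>V. L x = L x0} \<subseteq> (\<lambda>k j. x0 j + k j) ` K"
    proof
      fix x assume x: "x \<in> {x\<in>V. L x = L x0}"
      have "L x = (\<lambda>i. L x0 i + L (\<lambda>j. x j - x0 j) i)"
        using additive[of x0 "\<lambda>j. x j - x0 j"] by simp
      then have "(\<lambda>j. x j - x0 j) \<in> K"
        using x that by (auto simp: K_def V_def fun_eq_iff)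
      then show "x \<in> (\<lambda>k j. x0 j + k j) ` K"
        by (rule rev_image_eqI) simp
    qed
    then have "card {x\<in>V. L x = L x0} \<le> card ((\<lambda>k j. x0 j + k j) ` K)"
      using \<open>finite K\<close> by (intro card_mono) auto
    also have "\<dots> \<le> card K"
      using \<open>finite K\<close> by (rule card_image_le)
    finally show ?thesis .
  qed
  have "(\<Union>y\<in>L ` V. {x\<in>V. L x = y}) = V" by auto
  then have "card V \<le> (\<Sum>y\<in>L ` V. card {x\<in>V. L x = y})"
    using card_UN_le[OF finite_imageI[OF \<open>finite V\<close>, of L], of "\<lambda>y. {x\<in>V. L x = y}"] by simp
  also have "\<dots> \<le> card (L ` V) * card K"
    using sum_bounded_above[of "L ` V" "\<lambda>y. card {x\<in>V. L x = y}" "card K"] fibre by auto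
  also have "card (L ` V) \<le> CARD('a) ^ card I"
  proof -
    have "L ` V \<subseteq> {y :: 'i \<Rightarrow> 'a. \<forall>i. i \<notin> I \<longrightarrow> y i = 0}"
      using assms(4) by auto
    then have "card (L ` V) \<le> card {y :: 'i \<Rightarrow> 'a. \<forall>i. i \<notin> I \<longrightarrow> y i = 0}"
      by (intro card_mono finite_supported_functions assms(2))
    then show ?thesis
      by (simp add: card_supported_functions[OF assms(2)])
  qed
  finally show ?thesis
    using card_supported_functions[OF assms(1), where 'a='a] by (simp add: V_def K_def)
qed

lemma exists_full_support_power_sum_annihilator:
  fixes x :: "'d \<Rightarrow> 'a::{finite,field}"
  assumes "finite P" and "inj_on x P" and "P \<noteq> {}"
  shows "\<exists>w. (\<forall>p\<in>P. w p \<noteq> 0) \<and> (\<forall>e < card P - 1. (\<Sum>p\<in>P. w p * x p ^ e) = 0)"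
proof -
  define N where "N = card P - 1"
  define L where "L w = (\<lambda>e. if e < N then \<Sum>p\<in>P. w p * x p ^ e else 0)" for w :: "'d \<Rightarrow> 'a"
  define K where "K = {w. (\<forall>j. j \<notin> P \<longrightarrow> w j = 0) \<and> L w = (\<lambda>_. 0)}"
  have "card P = Suc N" using assms(1,3) by (simp add: N_def card_gt_0_iff)
  have "CARD('a) ^ card P \<le> CARD('a) ^ card {..<N} * card K"
    unfolding K_def using assms(1)
    by (intro card_kernel_ge) (auto simp: L_def fun_eq_iff distrib_right sum.distrib)
  moreover have "1 < CARD('a)"
    using card_mono[of UNIV "{0, 1 :: 'a}"] by simp
  ultimately have "1 < card K"
    using \<open>card P = Suc N\<close> by (simp add: less_le_trans)
  then obtain w where "w \<in> K" "w \<noteq> (\<lambda>_. 0)"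
    using card_mono[of "{\<lambda>_. 0}" K] by force
  then have "\<exists>p\<in>P. w p \<noteq> 0" by (auto simp: K_def)
  have w_eqs: "\<forall>e<N. (\<Sum>p\<in>P. w p * x p ^ e) = 0"
  proof (intro allI impI)
    fix e assume "e < N"
    have "L w e = 0" using \<open>w \<in> K\<close> by (simp add: K_def)
    with \<open>e < N\<close> show "(\<Sum>p\<in>P. w p * x p ^ e) = 0" by (simp add: L_def)
  qed
  from power_sums_vanish_imp_card_support_gt[OF assms(1,2) w_eqs \<open>\<exists>p\<in>P. w p \<noteq> 0\<close>]
  have "card {p\<in>P. w p \<noteq> 0} = card P"
    using card_mono[OF assms(1), of "{p\<in>P. w p \<noteq> 0}"] \<open>card P = Suc N\<close> by auto
  then have "{p\<in>P. w p \<noteq> 0} = P"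
    using assms(1) by (intro card_subset_eq) auto
  then show ?thesis using w_eqs by (auto simp: N_def)
qed

section \<open>The code\<close>

lemma mem_block_iff_div:
  fixes m :: nat
  assumes "0 < m"
  shows "j \<in> {i * m..<i * m + m} \<longleftrightarrow> j div m = i"
proof
  assume "j \<in> {i * m..<i * m + m}"
  then show "j div m = i" by (intro div_nat_eqI) (auto simp: mult.commute)
next
  assume "j div m = i"
  then have "i * m + j mod m = j"
    using div_mult_mod_eq[of j m] by simp
  then show "j \<in> {i * m..<i * m + m}"
    unfolding atLeastLessThan_iff using mod_less_divisor[OF assms, of j] by linarith
qed

lemma inj_on_case_sum:
  assumes "inj_on f A" and "inj_on g B" and "f ` A \<inter> g ` B = {}"
  shows "inj_on (case_sum f g) (A <+> B)"
proof (rule inj_onI)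
  fix u v assume "u \<in> A <+> B" "v \<in> A <+> B" "case_sum f g u = case_sum f g v"
  then show "u = v"
    using assms by (elim PlusE) (auto dest: inj_onD)
qed

lemma mult_add_eq_mult_add_imp:
  fixes s x x' i i' :: nat
  assumes "x < s" and "x' < s" and "s * i + x = s * i' + x'"
  shows "i = i' \<and> x = x'"
proof -
  have "i = (s * i + x) div s" "i' = (s * i' + x') div s"
    using assms(1,2) by simp_all
  then show ?thesis using assms(3) by simp
qed

lemma LRC_optimal_blockwise:
  fixes t b a \<delta> :: nat
  assumes "1 \<le> \<delta>" and "1 \<le> t" and "(t - 1) * a < b"
  shows "LRC_optimal (t * (b + a + \<delta> - 1)) (t * b) (a * t + \<delta>) (b + a) \<delta>"
proof -
  have "0 < b + a" using assms(3) by simp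
  have "(t - 1) * (b + a) < t * b"
    using assms(2,3) by (cases t) (simp_all add: algebra_simps)
  then have "real (t - 1) * real (b + a) < real (t * b)"
    by (metis of_nat_less_iff of_nat_mult)
  moreover have "(0::real) < real (b + a)"
    using \<open>0 < b + a\<close> by (simp only: of_nat_0_less_iff)
  ultimately have "real t - 1 < real (t * b) / real (b + a)"
    using assms(2) by (simp add: pos_less_divide_eq of_nat_diff)
  moreover have "real (t * b) / real (b + a) \<le> real t"
    using \<open>0 < b + a\<close> by (simp add: field_simps flip: of_nat_mult of_nat_add)
  ultimately have "\<lceil>real (t * b) / real (b + a)\<rceil> = int t"
    by (intro ceiling_unique) simp_all
  moreover have "int (t * (b + a + \<delta> - 1)) = int t * (int b + int a + int \<delta> - 1)"
    using assms(1) by (simp add: of_nat_diff)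
  ultimately show ?thesis
    unfolding LRC_optimal_def by (simp add: algebra_simps)
qed

locale code_F_setting =
  fixes \<alpha> \<beta> :: "nat \<Rightarrow> nat \<Rightarrow> 'a::{finite,field}" and \<gamma> :: "nat \<Rightarrow> 'a"
    and \<delta> t' s a kI :: nat
  assumes two_le_\<delta>: "2 \<le> \<delta>"
    and inj_\<alpha>: "inj_on (\<lambda>(i, j). \<alpha> i j) ({..<s * t'} \<times> {..<kI})"
    and inj_\<beta>: "inj_on (\<lambda>(i, j). \<beta> i j) ({..<t'} \<times> {..<a})"
    and inj_\<gamma>: "inj_on \<gamma> {..<\<delta> - 1}"
    and disjoint_\<alpha>_\<beta>: "(\<lambda>(i, j). \<alpha> i j) ` ({..<s * t'} \<times> {..<kI})
      \<inter> (\<lambda>(i, j). \<beta> i j) ` ({..<t'} \<times> {..<a}) = {}"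
    and disjoint_\<alpha>_\<gamma>: "(\<lambda>(i, j). \<alpha> i j) ` ({..<s * t'} \<times> {..<kI}) \<inter> \<gamma> ` {..<\<delta> - 1} = {}"
    and disjoint_\<beta>_\<gamma>: "(\<lambda>(i, j). \<beta> i j) ` ({..<t'} \<times> {..<a}) \<inter> \<gamma> ` {..<\<delta> - 1} = {}"
begin

abbreviation "r \<equiv> s * kI + a"
definition m :: nat where "m = s * kI + a + \<delta> - 1"
abbreviation "n \<equiv> t' * m"
abbreviation "C \<equiv> code_F \<delta> t' s a kI \<alpha> \<beta> \<gamma>"
abbreviation block :: "nat \<Rightarrow> nat set" where "block i \<equiv> {i * m..<i * m + m}"

definition pt :: "nat \<Rightarrow> 'a" where
  "pt j = evpt \<alpha> \<beta> \<gamma> s kI a (j div m) (j mod m)"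

lemma m_eq: "m = r + (\<delta> - 1)"
  using two_le_\<delta> by (simp add: m_def)

lemma m_pos: "0 < m"
  using two_le_\<delta> by (simp add: m_def)

lemma mem_block_iff: "j \<in> block i \<longleftrightarrow> j div m = i"
  using mem_block_iff_div[OF m_pos] .

lemma mem_block_eq_mult_add_mod:
  assumes "j \<in> block i"
  shows "j = i * m + j mod m"
proof -
  have "j div m = i" using assms mem_block_iff by blast
  then show ?thesis using div_mult_mod_eq[of j m] by simp
qed

lemma sum_block: "(\<Sum>j\<in>block i. f j) = (\<Sum>p<m. f (i * m + p))"
  using sum.shift_bounds_nat_ivl[of f 0 "i * m" m] by (simp add: atLeast0LessThan add.commute)

lemma pt_block: "p < m \<Longrightarrow> pt (i * m + p) = evpt \<alpha> \<beta> \<gamma> s kI a i p"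
  by (simp add: pt_def)

lemma mem_code_F_iff:
  "c \<in> C \<longleftrightarrow> (\<forall>j\<ge>n. c j = 0)
     \<and> (\<forall>i<t'. \<forall>e<\<delta> - 1. (\<Sum>j\<in>block i. c j * pt j ^ e) = 0)
     \<and> (\<forall>e\<in>{\<delta> - 1..<a * t' + \<delta> - 1}. (\<Sum>j<n. c j * pt j ^ e) = 0)"
proof -
  have "(\<Sum>j\<in>block i. c j * pt j ^ e) = (\<Sum>p<m. c (i * m + p) * evpt \<alpha> \<beta> \<gamma> s kI a i p ^ e)"
    for i e unfolding sum_block by (intro sum.cong) (simp_all add: pt_block)
  moreover have "(\<Sum>j<n. c j * pt j ^ e) = (\<Sum>i<t'. \<Sum>j\<in>block i. c j * pt j ^ e)" for e
    by (simp add: sum.nat_group)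
  ultimately show ?thesis
    unfolding code_F_def Let_def m_def[symmetric] by simp
qed

lemma code_F_diff: "c \<in> C \<Longrightarrow> c' \<in> C \<Longrightarrow> (\<lambda>j. c j - c' j) \<in> C"
  by (simp add: mem_code_F_iff left_diff_distrib sum_subtractf)

lemma code_F_zero: "(\<lambda>_. 0) \<in> C"
  by (simp add: mem_code_F_iff)

lemma code_F_power_sums:
  assumes "c \<in> C" and "e < a * t' + \<delta> - 1"
  shows "(\<Sum>j<n. c j * pt j ^ e) = 0"
proof (cases "e < \<delta> - 1")
  case True
  then show ?thesis
    using assms(1) by (simp add: mem_code_F_iff flip: sum.nat_group)
next
  case False
  then show ?thesis
    using assms by (simp add: mem_code_F_iff)
qed

definition label :: "nat \<Rightarrow> (nat \<times> nat) + (nat \<times> nat) + nat" where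
  "label j = (let i = j div m; p = j mod m in
     if p < s * kI then Inl (s * i + p div kI, p mod kI)
     else if p < r then Inr (Inl (i, p - s * kI))
     else Inr (Inr (p - r)))"

definition point_of_label :: "(nat \<times> nat) + (nat \<times> nat) + nat \<Rightarrow> 'a" where
  "point_of_label = case_sum (\<lambda>(i, j). \<alpha> i j) (case_sum (\<lambda>(i, j). \<beta> i j) \<gamma>)"

definition labels :: "((nat \<times> nat) + (nat \<times> nat) + nat) set" where
  "labels = ({..<s * t'} \<times> {..<kI}) <+> ({..<t'} \<times> {..<a}) <+> {..<\<delta> - 1}"

lemma pt_eq_point_of_label: "pt j = point_of_label (label j)"
  by (simp add: pt_def evpt_def label_def point_of_label_def Let_def)

lemma inj_on_point_of_label: "inj_on point_of_label labels"
  unfolding point_of_label_def labels_def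
  using inj_\<alpha> inj_\<beta> inj_\<gamma> disjoint_\<alpha>_\<beta> disjoint_\<alpha>_\<gamma> disjoint_\<beta>_\<gamma>
  by (intro inj_on_case_sum) (simp_all add: Plus_def image_Un image_image Int_Un_distrib)

lemma label_mem_labels:
  assumes "j < n"
  shows "label j \<in> labels"
proof -
  have "j div m < t'"
    using assms m_pos by (simp add: div_less_iff_less_mult mult.commute)
  moreover have "j mod m < r + (\<delta> - 1)"
    using m_pos m_eq by (metis mod_less_divisor)
  moreover have "s * (j div m) + j mod m div kI < s * t'" if "j mod m < s * kI"
  proof -
    have "j mod m div kI < s"
      using that by (rule less_mult_imp_div_less)
    then have "s * (j div m) + j mod m div kI < s * (j div m + 1)" by simp
    also have "\<dots> \<le> s * t'" by (rule mult_le_mono2) (use \<open>j div m < t'\<close> in simp)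
    finally show ?thesis .
  qed
  moreover have "j mod m mod kI < kI" if "j mod m < s * kI"
    using that by (cases "kI = 0") simp_all
  ultimately show ?thesis
    by (auto simp: label_def labels_def Let_def)
qed

lemma label_eq_imp:
  assumes "label j = label j'"
  shows "j mod m = j' mod m \<and> (j mod m < r \<longrightarrow> j div m = j' div m)"
proof -
  have "j mod m = j' mod m \<and> j div m = j' div m"
    if "p < s * kI" "p' < s * kI" "p = j mod m" "p' = j' mod m"
      "s * (j div m) + p div kI = s * (j' div m) + p' div kI" "p mod kI = p' mod kI" for p p'
  proof -
    have "p div kI < s" "p' div kI < s"
      using that(1,2) by (simp_all add: less_mult_imp_div_less)
    with that(5) have "j div m = j' div m" "p div kI = p' div kI"
      using mult_add_eq_mult_add_imp by blast+
    then show ?thesis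
      using that(3,4,6) by (metis div_mult_mod_eq)
  qed
  then show ?thesis
    using assms by (auto simp: label_def Let_def split: if_splits)
qed

lemma pt_eq_imp:
  assumes "j < n" and "j' < n" and "pt j = pt j'"
  shows "j mod m = j' mod m \<and> (j mod m < r \<longrightarrow> j = j')"
proof -
  have "label j = label j'"
    using assms inj_on_point_of_label label_mem_labels
    by (auto simp: pt_eq_point_of_label dest: inj_onD)
  then have "j mod m = j' mod m" and "j mod m < r \<Longrightarrow> j div m = j' div m"
    using label_eq_imp by blast+
  then show ?thesis by (metis div_mult_mod_eq)
qed

lemma block_subset: "i < t' \<Longrightarrow> block i \<subseteq> {..<n}"
  using mult_le_mono1[of "Suc i" t' m] by auto

lemma inj_on_pt_block:
  assumes "i < t'"
  shows "inj_on pt (block i)"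
proof (rule inj_onI)
  fix j j' assume "j \<in> block i" "j' \<in> block i" "pt j = pt j'"
  moreover have "j < n" "j' < n"
    using block_subset[OF assms] \<open>j \<in> block i\<close> \<open>j' \<in> block i\<close> by auto
  ultimately have "j mod m = j' mod m" using pt_eq_imp by blast
  moreover have "j div m = j' div m"
    using \<open>j \<in> block i\<close> \<open>j' \<in> block i\<close> by (simp only: mem_block_iff)
  ultimately show "j = j'" by (metis div_mult_mod_eq)
qed

lemma fibre_pt_singleton:
  assumes "j0 < n" and "j0 mod m < r"
  shows "{j\<in>{..<n}. pt j = pt j0} = {j0}"
proof (intro set_eqI iffI)
  fix j assume "j \<in> {j\<in>{..<n}. pt j = pt j0}"
  then have "j mod m = j0 mod m \<and> (j mod m < r \<longrightarrow> j = j0)"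
    using pt_eq_imp[of j j0] assms(1) by blast
  then have "j = j0" using assms(2) by metis
  then show "j \<in> {j0}" by simp
qed (use assms(1) in simp)

lemma block_weight_ge:
  assumes "c \<in> C" and "i < t'" and "\<exists>j\<in>block i. c j \<noteq> 0"
  shows "\<delta> \<le> card {j\<in>block i. c j \<noteq> 0}"
proof -
  have "\<forall>e<\<delta> - 1. (\<Sum>j\<in>block i. c j * pt j ^ e) = 0"
    using assms(1,2) by (simp add: mem_code_F_iff)
  from power_sums_vanish_imp_card_support_gt[OF _ inj_on_pt_block[OF assms(2)] this assms(3)]
  show ?thesis using two_le_\<delta> by simp
qed

text \<open>The gammas are shared by all blocks, so the power sums of a codeword only see the sums
  of its entries over coordinates with a common evaluation point.\<close>
definition fibre_sum :: "(nat \<Rightarrow> 'a) \<Rightarrow> 'a \<Rightarrow> 'a" where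
  "fibre_sum c y = (\<Sum>j\<in>{j\<in>{..<n}. pt j = y}. c j)"

lemma fibre_sum_power_sums:
  assumes "c \<in> C" and "e < a * t' + \<delta> - 1"
  shows "(\<Sum>y\<in>pt ` {..<n}. fibre_sum c y * y ^ e) = 0"
proof -
  have "(\<Sum>y\<in>pt ` {..<n}. fibre_sum c y * y ^ e)
      = (\<Sum>y\<in>pt ` {..<n}. \<Sum>j\<in>{j\<in>{..<n}. pt j = y}. c j * pt j ^ e)"
    unfolding fibre_sum_def sum_distrib_right by (intro sum.cong refl) auto
  also have "\<dots> = (\<Sum>j<n. c j * pt j ^ e)"
    by (rule sum.image_gen[symmetric]) simp
  finally show ?thesis
    using code_F_power_sums[OF assms] by simp
qed

lemma fibre_support_subset:
  "{y\<in>pt ` {..<n}. fibre_sum c y \<noteq> 0} \<subseteq> pt ` {j\<in>{..<n}. c j \<noteq> 0}"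
proof
  fix y assume "y \<in> {y\<in>pt ` {..<n}. fibre_sum c y \<noteq> 0}"
  then have "(\<Sum>j\<in>{j\<in>{..<n}. pt j = y}. c j) \<noteq> 0"
    by (simp add: fibre_sum_def)
  then obtain j where "j \<in> {j\<in>{..<n}. pt j = y}" "c j \<noteq> 0"
    by (rule sum.not_neutral_contains_not_neutral)
  then show "y \<in> pt ` {j\<in>{..<n}. c j \<noteq> 0}" by blast
qed

lemma card_block_support_le:
  assumes "i < t'" and "\<forall>j\<in>block i. j mod m < r \<longrightarrow> c j = 0"
  shows "card {j\<in>block i. c j \<noteq> 0} \<le> \<delta> - 1"
proof -
  have "{j\<in>block i. c j \<noteq> 0} \<subseteq> {i * m + r..<i * m + m}"
  proof
    fix j assume j: "j \<in> {j\<in>block i. c j \<noteq> 0}"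
    then have "j \<in> block i" "c j \<noteq> 0" by simp_all
    then have "r \<le> j mod m" using assms(2) by (meson not_le)
    moreover have "j = i * m + j mod m" "j < i * m + m"
      using j mem_block_eq_mult_add_mod[of j i] by simp_all
    ultimately show "j \<in> {i * m + r..<i * m + m}"
      unfolding atLeastLessThan_iff by linarith
  qed
  then have "card {j\<in>block i. c j \<noteq> 0} \<le> card {i * m + r..<i * m + m}"
    by (intro card_mono) simp_all
  also have "\<dots> = \<delta> - 1"
    using m_eq by simp
  finally show ?thesis .
qed

lemma fibre_sums_zero_imp_zero:
  assumes "c \<in> C" and "\<forall>y\<in>pt ` {..<n}. fibre_sum c y = 0"
  shows "c = (\<lambda>_. 0)"
proof -
  \<comment> \<open>Off the gammas every fibre is a single coordinate.\<close>
  have outside_gammas: "c j = 0" if "j < n" "j mod m < r" for j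
  proof -
    have "fibre_sum c (pt j) = 0" using assms(2) that(1) by blast
    then show ?thesis unfolding fibre_sum_def fibre_pt_singleton[OF that] by simp
  qed
  have "c j = 0" if "j < n" for j
  proof (rule ccontr)
    assume "c j \<noteq> 0"
    define i where "i = j div m"
    have "i < t'"
      using that m_pos by (simp add: i_def div_less_iff_less_mult)
    have "j \<in> block i"
      by (simp only: mem_block_iff i_def)
    have "card {j'\<in>block i. c j' \<noteq> 0} \<le> \<delta> - 1"
      using block_subset[OF \<open>i < t'\<close>] outside_gammas
      by (intro card_block_support_le \<open>i < t'\<close>) blast
    moreover have "\<delta> \<le> card {j'\<in>block i. c j' \<noteq> 0}"
      using block_weight_ge[OF assms(1) \<open>i < t'\<close>] \<open>j \<in> block i\<close> \<open>c j \<noteq> 0\<close> by blast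
    ultimately show False using two_le_\<delta> by simp
  qed
  moreover have "c j = 0" if "n \<le> j" for j
    using assms(1) that by (simp add: mem_code_F_iff)
  ultimately show ?thesis by (meson not_le)
qed

lemma fibre_support_gt:
  assumes "c \<in> C" and "c \<noteq> (\<lambda>_. 0)"
  shows "a * t' + \<delta> - 1 < card {y\<in>pt ` {..<n}. fibre_sum c y \<noteq> 0}"
proof -
  have "\<exists>y\<in>pt ` {..<n}. fibre_sum c y \<noteq> 0"
    using fibre_sums_zero_imp_zero[OF assms(1)] assms(2) by blast
  then show ?thesis
    using power_sums_vanish_imp_card_support_gt[of "pt ` {..<n}" "\<lambda>y. y" "a * t' + \<delta> - 1"]
      fibre_sum_power_sums[OF assms(1)] by simp
qed

lemma codeword_weight_ge:
  assumes "c \<in> C" and "c \<noteq> (\<lambda>_. 0)"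
  shows "a * t' + \<delta> \<le> card {j\<in>{..<n}. c j \<noteq> 0}"
proof -
  have "card {y\<in>pt ` {..<n}. fibre_sum c y \<noteq> 0} \<le> card (pt ` {j\<in>{..<n}. c j \<noteq> 0})"
    by (intro card_mono fibre_support_subset) simp
  also have "\<dots> \<le> card {j\<in>{..<n}. c j \<noteq> 0}"
    by (intro card_image_le) simp
  finally show ?thesis
    using fibre_support_gt[OF assms] by simp
qed

definition alpha_coords :: "nat set" where
  "alpha_coords = (\<Union>i<t'. {i * m..<i * m + s * kI})"

lemma card_alpha_coords: "card alpha_coords = s * t' * kI"
proof -
  have "{i * m..<i * m + s * kI} \<subseteq> block i" for i
    using m_eq by auto
  moreover have "block i \<inter> block i' = {}" if "i \<noteq> i'" for i i'
    using that by (metis disjoint_iff mem_block_iff)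
  ultimately have "{i * m..<i * m + s * kI} \<inter> {i' * m..<i' * m + s * kI} = {}"
    if "i \<noteq> i'" for i i'
    using that by blast
  then have "card alpha_coords = (\<Sum>i<t'. card {i * m..<i * m + s * kI})"
    unfolding alpha_coords_def by (intro card_UN_disjoint) auto
  then show ?thesis by simp
qed

lemma pt_outside_alpha_coords:
  assumes "j < n" and "j \<notin> alpha_coords"
  shows "pt j \<in> (\<lambda>(i, j). \<beta> i j) ` ({..<t'} \<times> {..<a}) \<union> \<gamma> ` {..<\<delta> - 1}"
proof -
  define i p where "i = j div m" and "p = j mod m"
  have "i < t'"
    using assms(1) m_pos by (simp add: i_def div_less_iff_less_mult)
  have "j = i * m + p"
    using mem_block_eq_mult_add_mod[of j i] by (simp add: i_def p_def mem_block_iff)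
  then have "s * kI \<le> p"
    using assms(2) \<open>i < t'\<close> unfolding alpha_coords_def by (auto simp: not_le)
  moreover have "p < r + (\<delta> - 1)"
    using m_pos m_eq by (simp add: p_def)
  ultimately show ?thesis
    using \<open>i < t'\<close> by (auto simp: pt_def evpt_def i_def [symmetric] p_def [symmetric]
        intro!: image_eqI[where x = "(i, p - s * kI)"])
qed

text \<open>The nonzero fibre sums of a codeword vanishing on the alpha coordinates sit at the a t'
  betas and delta - 1 gammas: too few points for the a t' + delta - 1 vanishing power sums.\<close>
lemma inj_on_restrict_alpha_coords: "inj_on (\<lambda>c j. if j \<in> alpha_coords then c j else 0) C"
proof (rule inj_onI)
  fix c c' assume "c \<in> C" "c' \<in> C"
    and restrict_eq: "(\<lambda>j. if j \<in> alpha_coords then c j else 0)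
      = (\<lambda>j. if j \<in> alpha_coords then c' j else 0)"
  define d where "d j = c j - c' j" for j
  have "d \<in> C"
    using code_F_diff[OF \<open>c \<in> C\<close> \<open>c' \<in> C\<close>] by (simp add: d_def [abs_def])
  have d_alpha: "d j = 0" if "j \<in> alpha_coords" for j
    using fun_cong[OF restrict_eq, of j] that by (simp add: d_def)
  have "{y\<in>pt ` {..<n}. fibre_sum d y \<noteq> 0}
      \<subseteq> (\<lambda>(i, j). \<beta> i j) ` ({..<t'} \<times> {..<a}) \<union> \<gamma> ` {..<\<delta> - 1}"
    (is "_ \<subseteq> ?beta_gamma")
  proof
    fix y assume "y \<in> {y\<in>pt ` {..<n}. fibre_sum d y \<noteq> 0}"
    then obtain j where "j < n" "d j \<noteq> 0" "y = pt j"
      using fibre_support_subset[of d] by blast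
    with d_alpha pt_outside_alpha_coords show "y \<in> ?beta_gamma"
      by blast
  qed
  then have "card {y\<in>pt ` {..<n}. fibre_sum d y \<noteq> 0} \<le> card ?beta_gamma"
    by (intro card_mono) simp_all
  also have "\<dots> \<le> card ((\<lambda>(i, j). \<beta> i j) ` ({..<t'} \<times> {..<a})) + card (\<gamma> ` {..<\<delta> - 1})"
    by (rule card_Un_le)
  also have "\<dots> \<le> card ({..<t'} \<times> {..<a}) + card {..<\<delta> - 1}"
    by (intro add_mono card_image_le) simp_all
  finally have "\<not> a * t' + \<delta> - 1 < card {y\<in>pt ` {..<n}. fibre_sum d y \<noteq> 0}"
    using two_le_\<delta> by (simp add: mult.commute)
  then have "d = (\<lambda>_. 0)"
    using fibre_support_gt[OF \<open>d \<in> C\<close>] by blast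
  then show "c = c'"
    by (simp add: d_def fun_eq_iff)
qed

lemma finite_code_F: "finite C"
proof (rule finite_subset)
  show "C \<subseteq> {c. \<forall>j. j \<notin> {..<n} \<longrightarrow> c j = 0}"
    by (auto simp: mem_code_F_iff)
qed (rule finite_supported_functions, simp)

lemma card_code_F_le: "card C \<le> CARD('a) ^ (s * t' * kI)"
proof -
  have "card C = card ((\<lambda>c j. if j \<in> alpha_coords then c j else 0) ` C)"
    using inj_on_restrict_alpha_coords by (simp add: card_image)
  also have "\<dots> \<le> card {c :: nat \<Rightarrow> 'a. \<forall>j. j \<notin> alpha_coords \<longrightarrow> c j = 0}"
    by (intro card_mono finite_supported_functions) (auto simp: alpha_coords_def)
  also have "\<dots> = CARD('a) ^ card alpha_coords"
    by (rule card_supported_functions) (simp add: alpha_coords_def)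
  also have "\<dots> = CARD('a) ^ (s * t' * kI)"
    by (simp only: card_alpha_coords)
  finally show ?thesis .
qed

lemma card_code_F_ge: "CARD('a) ^ (s * t' * kI) \<le> card C"
proof -
  define I :: "((nat \<times> nat) + nat) set" where
    "I = ({..<t'} \<times> {..<\<delta> - 1}) <+> {\<delta> - 1..<a * t' + \<delta> - 1}"
  define L :: "(nat \<Rightarrow> 'a) \<Rightarrow> (nat \<times> nat) + nat \<Rightarrow> 'a" where
    "L c = case_sum
       (\<lambda>(i, e). if i < t' \<and> e < \<delta> - 1 then \<Sum>j\<in>block i. c j * pt j ^ e else 0)
       (\<lambda>e. if e \<in> {\<delta> - 1..<a * t' + \<delta> - 1} then \<Sum>j<n. c j * pt j ^ e else 0)" for c
  have "CARD('a) ^ card {..<n}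
      \<le> CARD('a) ^ card I * card {c. (\<forall>j. j \<notin> {..<n} \<longrightarrow> c j = 0) \<and> L c = (\<lambda>_. 0)}"
    by (rule card_kernel_ge) (auto simp: I_def L_def fun_eq_iff distrib_right sum.distrib split: sum.split)
  moreover have "{c. (\<forall>j. j \<notin> {..<n} \<longrightarrow> c j = 0) \<and> L c = (\<lambda>_. 0)} = C"
    by (auto simp: mem_code_F_iff L_def fun_eq_iff split_sum_all)
  moreover have "card I = t' * (\<delta> - 1) + a * t'"
    using two_le_\<delta> by (simp add: I_def card_Plus card_cartesian_product)
  then have "card {..<n} = card I + s * t' * kI"
    by (simp add: m_eq algebra_simps)
  ultimately show ?thesis
    by (simp add: power_add)
qed

lemma initial_block_subset:
  assumes "1 \<le> t'" and "M \<le> m"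
  shows "{..<M} \<subseteq> block 0" and "{..<M} \<subseteq> {..<n}"
proof -
  have "m \<le> n"
    using mult_le_mono1[OF assms(1), of m] by simp
  then show "{..<M} \<subseteq> {..<n}"
    using le_trans[OF assms(2)] by auto
  show "{..<M} \<subseteq> block 0"
    using assms(2) by auto
qed

lemma mem_code_F_if_initial_support:
  assumes "1 \<le> t'" and "a * t' + \<delta> \<le> m"
    and "\<forall>j \<ge> a * t' + \<delta>. c j = 0"
    and "\<forall>e < a * t' + \<delta> - 1. (\<Sum>j < a * t' + \<delta>. c j * pt j ^ e) = 0"
  shows "c \<in> C"
proof -
  define M where "M = a * t' + \<delta>"
  have initial: "{..<M} \<subseteq> block 0" "{..<M} \<subseteq> {..<n}"
    unfolding M_def by (rule initial_block_subset[OF assms(1,2)])+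
  have sums: "(\<Sum>j\<in>J. c j * pt j ^ e) = 0" if "{..<M} \<subseteq> J" "finite J" "e < M - 1" for J e
  proof -
    have "(\<Sum>j\<in>J. c j * pt j ^ e) = (\<Sum>j<M. c j * pt j ^ e)"
      using that assms(3) by (intro sum.mono_neutral_right) (auto simp: M_def)
    then show ?thesis
      using assms(4) that(3) by (simp add: M_def)
  qed
  show ?thesis
    unfolding mem_code_F_iff
  proof (intro conjI allI impI ballI)
    fix j assume "n \<le> j"
    then show "c j = 0" using initial(2) assms(3) by (auto simp: M_def)
  next
    fix i e assume "i < t'" "e < \<delta> - 1"
    show "(\<Sum>j\<in>block i. c j * pt j ^ e) = 0"
    proof (cases "i = 0")
      case True
      then show ?thesis
        using sums initial \<open>e < \<delta> - 1\<close> by (simp add: M_def)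
    next
      case False
      then have "M \<le> i * m"
        using assms(2) mult_le_mono1[of 1 i m] unfolding M_def by linarith
      then have "c j = 0" if "j \<in> block i" for j
        using that assms(3) by (simp add: M_def)
      then show ?thesis by simp
    qed
  next
    fix e assume "e \<in> {\<delta> - 1..<a * t' + \<delta> - 1}"
    then show "(\<Sum>j<n. c j * pt j ^ e) = 0"
      by (intro sums) (use initial in \<open>auto simp: M_def\<close>)
  qed
qed

lemma exists_codeword_weight_eq:
  assumes "1 \<le> t'" and "a * t' + \<delta> \<le> m"
  shows "\<exists>c\<in>C. card {j\<in>{..<n}. c j \<noteq> 0} = a * t' + \<delta>"
proof -
  define M where "M = a * t' + \<delta>"
  have initial: "{..<M} \<subseteq> block 0" "{..<M} \<subseteq> {..<n}"
    unfolding M_def by (rule initial_block_subset[OF assms(1,2)])+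
  have "inj_on pt {..<M}"
    using inj_on_pt_block[of 0] assms(1) initial by (auto intro: inj_on_subset)
  moreover have "{..<M} \<noteq> {}"
    using two_le_\<delta> by (simp add: M_def lessThan_empty_iff)
  ultimately have "\<exists>w. (\<forall>p\<in>{..<M}. w p \<noteq> 0)
      \<and> (\<forall>e < card {..<M} - 1. (\<Sum>p\<in>{..<M}. w p * pt p ^ e) = 0)"
    by (rule exists_full_support_power_sum_annihilator[OF finite_lessThan])
  then obtain w where w_nonzero: "\<forall>p\<in>{..<M}. w p \<noteq> 0"
    and w_sums: "\<forall>e < M - 1. (\<Sum>p<M. w p * pt p ^ e) = 0"
    by auto
  define c where "c j = (if j < M then w j else 0)" for j
  have "c \<in> C"
    using w_sums by (intro mem_code_F_if_initial_support assms) (auto simp: c_def M_def)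
  moreover have "{j\<in>{..<n}. c j \<noteq> 0} = {..<M}"
    using w_nonzero initial by (auto simp: c_def)
  ultimately show ?thesis
    by (metis M_def card_lessThan)
qed

lemma min_dist_code_F:
  assumes "1 \<le> t'" and "a * t' + \<delta> \<le> m"
  shows "min_dist n C = a * t' + \<delta>"
proof -
  define dists where "dists = {hamming_dist n c c' | c c'. c \<in> C \<and> c' \<in> C \<and> c \<noteq> c'}"
  have "finite dists"
  proof -
    have "dists \<subseteq> (\<lambda>(c, c'). hamming_dist n c c') ` (C \<times> C)"
      by (auto simp: dists_def)
    then show ?thesis
      using finite_code_F finite_subset by blast
  qed
  have "a * t' + \<delta> \<le> d" if d_mem: "d \<in> dists" for d
  proof -
    obtain c c' where "d = hamming_dist n c c'" "c \<in> C" "c' \<in> C" "c \<noteq> c'"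
      using d_mem unfolding dists_def by blast
    moreover have "(\<lambda>j. c j - c' j) \<noteq> (\<lambda>_. 0)"
      using \<open>c \<noteq> c'\<close> by (auto simp: fun_eq_iff)
    ultimately show ?thesis
      using codeword_weight_ge[OF code_F_diff] by (simp add: hamming_dist_def)
  qed
  moreover have "a * t' + \<delta> \<in> dists"
  proof -
    obtain c where "c \<in> C" and weight: "card {j\<in>{..<n}. c j \<noteq> 0} = a * t' + \<delta>"
      using exists_codeword_weight_eq[OF assms] by blast
    then have "c \<noteq> (\<lambda>_. 0)"
      using two_le_\<delta> by (intro notI) simp
    then show ?thesis
      unfolding dists_def using \<open>c \<in> C\<close> code_F_zero weight
      by (intro CollectI exI[of _ c] exI[of _ "\<lambda>_. 0"]) (simp add: hamming_dist_def)
  qed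
  ultimately show ?thesis
    unfolding min_dist_def dists_def[symmetric] using \<open>finite dists\<close> by (intro Min_eqI) auto
qed

lemma locality_code_F:
  assumes "j0 < n"
  shows "\<exists>J. J \<subseteq> {..<n} \<and> j0 \<in> J \<and> card J \<le> r + \<delta> - 1 \<and>
           (\<forall>c\<in>C. \<forall>c'\<in>C. (\<exists>j\<in>J. c j \<noteq> c' j) \<longrightarrow> \<delta> \<le> card {j\<in>J. c j \<noteq> c' j})"
proof (intro exI conjI)
  define i where "i = j0 div m"
  have "i < t'"
    using assms m_pos by (simp add: i_def div_less_iff_less_mult)
  show "block i \<subseteq> {..<n}"
    using block_subset[OF \<open>i < t'\<close>] .
  show "j0 \<in> block i"
    by (simp only: mem_block_iff i_def)
  show "card (block i) \<le> r + \<delta> - 1"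
    by (simp add: m_def)
  show "\<forall>c\<in>C. \<forall>c'\<in>C. (\<exists>j\<in>block i. c j \<noteq> c' j)
      \<longrightarrow> \<delta> \<le> card {j\<in>block i. c j \<noteq> c' j}"
    using block_weight_ge[OF code_F_diff \<open>i < t'\<close>] by simp
qed

lemma is_LRC_code_F:
  assumes "1 \<le> t'" and "a * t' + \<delta> \<le> m"
  shows "is_LRC n (s * t' * kI) (a * t' + \<delta>) r \<delta> C"
  unfolding is_LRC_def
  using card_code_F_le card_code_F_ge min_dist_code_F[OF assms] locality_code_F
  by (auto simp: mem_code_F_iff)

end

theorem mainTheorem11:
  fixes \<alpha> \<beta> :: "nat \<Rightarrow> nat \<Rightarrow> 'a::{finite,field}" and \<gamma> :: "nat \<Rightarrow> 'a"
    and \<delta> t' s a kI :: nat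
  assumes "\<delta> \<ge> 2" and "t' \<ge> 1" and "s \<ge> 2" and "a \<ge> 1" and "kI \<ge> 1"
    and "a * t' + \<delta> \<le> kI"
    and "t' * (s * kI + a) + \<delta> - 1 \<le> CARD('a)"
    and "inj_on (\<lambda>(i, j). \<alpha> i j) ({..<s * t'} \<times> {..<kI})"
    and "inj_on (\<lambda>(i, j). \<beta> i j) ({..<t'} \<times> {..<a})"
    and "inj_on \<gamma> {..<\<delta> - 1}"
    and "(\<lambda>(i, j). \<alpha> i j) ` ({..<s * t'} \<times> {..<kI}) \<inter> (\<lambda>(i, j). \<beta> i j) ` ({..<t'} \<times> {..<a}) = {}"
    and "(\<lambda>(i, j). \<alpha> i j) ` ({..<s * t'} \<times> {..<kI}) \<inter> \<gamma> ` {..<\<delta> - 1} = {}"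
    and "(\<lambda>(i, j). \<beta> i j) ` ({..<t'} \<times> {..<a}) \<inter> \<gamma> ` {..<\<delta> - 1} = {}"
  shows "is_LRC (t' * (s * kI + a + \<delta> - 1)) (s * t' * kI) (a * t' + \<delta>) (s * kI + a) \<delta>
           (code_F \<delta> t' s a kI \<alpha> \<beta> \<gamma>)
       \<and> LRC_optimal (t' * (s * kI + a + \<delta> - 1)) (s * t' * kI) (a * t' + \<delta>) (s * kI + a) \<delta>"
proof -
  interpret code_F_setting \<alpha> \<beta> \<gamma> \<delta> t' s a kI
    using assms by unfold_locales auto
  have "kI \<le> s * kI"
    using \<open>s \<ge> 2\<close> by simp
  then have block_length: "a * t' + \<delta> \<le> m"
    using \<open>a * t' + \<delta> \<le> kI\<close> m_eq by linarith
  have "(t' - 1) * a \<le> a * t'"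
    unfolding mult.commute[of a] by (rule mult_le_mono1) simp
  then have "(t' - 1) * a < s * kI"
    using \<open>a * t' + \<delta> \<le> kI\<close> \<open>kI \<le> s * kI\<close> \<open>\<delta> \<ge> 2\<close> by linarith
  then show ?thesis
    using is_LRC_code_F[OF \<open>t' \<ge> 1\<close> block_length] LRC_optimal_blockwise[of \<delta> t' a "s * kI"]
      \<open>t' \<ge> 1\<close> \<open>\<delta> \<ge> 2\<close>
    by (simp add: m_def mult_ac)
qed

end
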